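(* For every integer $n\geq2$, $\mathcal{N}^{\perp}\cap HC(W_n^{*})=\varnothing$.
   Context: $H^2$ denotes the Hardy space of analytic functions $f(z)=\sum_{j\ge0}\hat f(j)z^j$ on the open unit disk $\mathbb{D}$ with $\sum_{j}|\hat f(j)|^2<\infty$. For $n\in\mathbb{N}$, $W_n$ is the bounded operator on $H^2$ given by $W_nf(z)=(1+z+\cdots+z^{n-1})f(z^n)$, $W_n^{*}$ is its adjoint, and $HC(W_n^{*})$ is the set of vectors with dense orbit under $W_n^{*}$. For each integer $k\geq2$, $h_k(z)=\frac{1}{1-z}\log\left(\frac{1+z+\cdots+z^{k-1}}{k}\right)$ (holomorphic branch of the logarithm on $\mathbb{D}$, real at $z=0$), which lies in $H^2$; $\mathcal{N}=\mathrm{span}\{h_k:k\geq2\}$ and $\mathcal{N}^\perp$ is its orthogonal complement in $H^2$. *)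

theory Defs
  imports "HOL-Complex_Analysis.Complex_Analysis"
begin

definition coef :: "(complex \<Rightarrow> complex) \<Rightarrow> nat \<Rightarrow> complex" where
  "coef F j = (deriv ^^ j) F 0 / of_nat (fact j)"

definition H2 :: "(complex \<Rightarrow> complex) set" where
  "H2 = {F. F holomorphic_on ball 0 1 \<and> summable (\<lambda>j. (cmod (coef F j))\<^sup>2)}"

definition h2_inner :: "(complex \<Rightarrow> complex) \<Rightarrow> (complex \<Rightarrow> complex) \<Rightarrow> complex" where
  "h2_inner F G = (\<Sum>j. coef F j * cnj (coef G j))"

definition h2_norm :: "(complex \<Rightarrow> complex) \<Rightarrow> real" where
  "h2_norm F = sqrt (\<Sum>j. (cmod (coef F j))\<^sup>2)"

definition Wop :: "nat \<Rightarrow> (complex \<Rightarrow> complex) \<Rightarrow> (complex \<Rightarrow> complex)" where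
  "Wop n F = (\<lambda>z. (\<Sum>i<n. z ^ i) * F (z ^ n))"

definition is_adjoint_on_H2 ::
  "((complex \<Rightarrow> complex) \<Rightarrow> (complex \<Rightarrow> complex)) \<Rightarrow> ((complex \<Rightarrow> complex) \<Rightarrow> (complex \<Rightarrow> complex)) \<Rightarrow> bool" where
  "is_adjoint_on_H2 T S \<longleftrightarrow> (\<forall>G\<in>H2. S G \<in> H2) \<and>
     (\<forall>F\<in>H2. \<forall>G\<in>H2. h2_inner (T F) G = h2_inner F (S G))"

definition hypercyclic_vectors ::
  "((complex \<Rightarrow> complex) \<Rightarrow> (complex \<Rightarrow> complex)) \<Rightarrow> (complex \<Rightarrow> complex) set" where
  "hypercyclic_vectors T =
     {F \<in> H2. \<forall>G\<in>H2. \<forall>e>0. \<exists>m::nat. h2_norm ((T ^^ m) F - G) < e}"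

text \<open>h_k(z) = 1/(1-z) * log((1+z+...+z^(k-1))/k); the principal logarithm is the
  holomorphic branch on the disk that is real at 0.\<close>
definition hk :: "nat \<Rightarrow> complex \<Rightarrow> complex" where
  "hk k = (\<lambda>z. (1 / (1 - z)) * Ln ((\<Sum>i<k. z ^ i) / of_nat k))"

definition Nspan :: "(complex \<Rightarrow> complex) set" where
  "Nspan = {G. \<exists>K c. finite K \<and> K \<subseteq> {2..} \<and> G = (\<lambda>z. \<Sum>k\<in>K. c k * hk k z)}"

definition Nperp :: "(complex \<Rightarrow> complex) set" where
  "Nperp = {F \<in> H2. \<forall>G\<in>Nspan. h2_inner F G = 0}"

end

theory Submission
  imports Defs
begin

(* Since 1 + z + ... + z^(n-1) = (1 - z^n)/(1 - z), one computes W_n h_k = h_(nk) - h_n, so W_n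
   maps span{h_k} into itself and its adjoint maps the orthogonal complement into itself. An
   orbit starting in that complement therefore stays orthogonal to h_2 != 0, hence at distance
   at least |h_2| from h_2, and cannot be dense. Most of the work is showing h_k in H^2: the
   Taylor coefficients of h_k are H_J - H_(J div k) - log k (harmonic numbers H_J), and these
   are bounded by 2k/J. *)

section \<open>The Hardy space\<close>

lemma coef_cong_ball:
  assumes "r > 0" "\<And>z. z \<in> ball 0 r \<Longrightarrow> f z = g z"
  shows "coef f = coef g"
proof
  fix j
  have "eventually (\<lambda>z. f z = g z) (nhds 0)"
    unfolding eventually_nhds using assms by (intro exI[of _ "ball 0 r"]) auto
  then show "coef f j = coef g j"
    unfolding coef_def using higher_deriv_cong_ev[OF _ refl] by simp
qed

lemma coef_add:
  assumes "f holomorphic_on ball 0 1" "g holomorphic_on ball 0 1"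
  shows "coef (\<lambda>z. f z + g z) j = coef f j + coef g j"
  unfolding coef_def using higher_deriv_add[OF assms, of 0 j]
  by (simp add: add_divide_distrib)

lemma coef_diff:
  assumes "f holomorphic_on ball 0 1" "g holomorphic_on ball 0 1"
  shows "coef (\<lambda>z. f z - g z) j = coef f j - coef g j"
  unfolding coef_def using higher_deriv_diff[OF assms, of 0 j]
  by (simp add: diff_divide_distrib)

lemma coef_cmult:
  assumes "f holomorphic_on ball 0 1"
  shows "coef (\<lambda>z. c * f z) j = c * coef f j"
  unfolding coef_def using higher_deriv_cmult[OF assms, of 0 j c] by simp

lemma H2_holomorphic: "F \<in> H2 \<Longrightarrow> F holomorphic_on ball 0 1"
  by (simp add: H2_def)

lemma H2_summable: "F \<in> H2 \<Longrightarrow> summable (\<lambda>j. (cmod (coef F j))\<^sup>2)"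
  by (simp add: H2_def)

lemma H2_add:
  assumes "f \<in> H2" "g \<in> H2"
  shows "(\<lambda>z. f z + g z) \<in> H2"
proof -
  have hf: "f holomorphic_on ball 0 1" and hg: "g holomorphic_on ball 0 1"
    using assms by (auto simp: H2_def)
  have bound: "(cmod (coef (\<lambda>z. f z + g z) j))\<^sup>2 \<le> 2 * (cmod (coef f j))\<^sup>2 + 2 * (cmod (coef g j))\<^sup>2"
    for j
  proof -
    have "(cmod (coef (\<lambda>z. f z + g z) j))\<^sup>2 \<le> (cmod (coef f j) + cmod (coef g j))\<^sup>2"
      unfolding coef_add[OF hf hg] by (intro power_mono norm_triangle_ineq) auto
    also have "\<dots> \<le> 2 * (cmod (coef f j))\<^sup>2 + 2 * (cmod (coef g j))\<^sup>2"
      by (smt (verit) sum_squares_bound power2_sum)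
    finally show ?thesis .
  qed
  have "summable (\<lambda>j. 2 * (cmod (coef f j))\<^sup>2 + 2 * (cmod (coef g j))\<^sup>2)"
    using assms by (intro summable_add summable_mult H2_summable)
  then have "summable (\<lambda>j. (cmod (coef (\<lambda>z. f z + g z) j))\<^sup>2)"
    by (rule summable_comparison_test[rotated]) (use bound in auto)
  moreover have "(\<lambda>z. f z + g z) holomorphic_on ball 0 1"
    using hf hg by (intro holomorphic_intros)
  ultimately show ?thesis by (simp add: H2_def)
qed

lemma H2_cmult:
  assumes "f \<in> H2"
  shows "(\<lambda>z. c * f z) \<in> H2"
proof -
  have hf: "f holomorphic_on ball 0 1" using assms by (auto simp: H2_def)
  have "(cmod (coef (\<lambda>z. c * f z) j))\<^sup>2 = (cmod c)\<^sup>2 * (cmod (coef f j))\<^sup>2" for j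
    unfolding coef_cmult[OF hf] by (simp add: norm_mult power_mult_distrib)
  moreover have "summable (\<lambda>j. (cmod c)\<^sup>2 * (cmod (coef f j))\<^sup>2)"
    using assms by (intro summable_mult H2_summable)
  moreover have "(\<lambda>z. c * f z) holomorphic_on ball 0 1"
    using hf by (intro holomorphic_intros)
  ultimately show ?thesis by (simp add: H2_def)
qed

lemma H2_linear_combination:
  assumes "finite K" "\<And>k. k \<in> K \<Longrightarrow> f k \<in> H2"
  shows "(\<lambda>z. \<Sum>k\<in>K. c k * f k z) \<in> H2"
  using assms
proof (induction K rule: finite_induct)
  case empty
  then show ?case by (simp add: H2_def coef_def)
next
  case (insert x K)
  then have "(\<lambda>z. c x * f x z + (\<Sum>k\<in>K. c k * f k z)) \<in> H2"
    by (intro H2_add H2_cmult) auto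
  then show ?case using insert by simp
qed

lemma summable_h2_inner:
  assumes "F \<in> H2" "G \<in> H2"
  shows "summable (\<lambda>j. coef F j * cnj (coef G j))"
proof (rule summable_comparison_test[rotated])
  show "summable (\<lambda>j. (cmod (coef F j))\<^sup>2 + (cmod (coef G j))\<^sup>2)"
    using assms by (intro summable_add H2_summable)
  have "norm (coef F j * cnj (coef G j)) \<le> (cmod (coef F j))\<^sup>2 + (cmod (coef G j))\<^sup>2" for j
    using sum_squares_bound[of "cmod (coef F j)" "cmod (coef G j)"]
      mult_nonneg_nonneg[OF norm_ge_zero norm_ge_zero, of "coef F j" "coef G j"]
    unfolding norm_mult complex_mod_cnj by linarith
  then show "\<exists>N. \<forall>j\<ge>N. norm (coef F j * cnj (coef G j)) \<le> (cmod (coef F j))\<^sup>2 + (cmod (coef G j))\<^sup>2"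
    by blast
qed

lemma h2_inner_commute:
  assumes "F \<in> H2" "G \<in> H2"
  shows "h2_inner F G = cnj (h2_inner G F)"
proof -
  have "(\<lambda>j. coef G j * cnj (coef F j)) sums h2_inner G F"
    unfolding h2_inner_def using summable_h2_inner[OF assms(2,1)] by (rule summable_sums)
  then have "(\<lambda>j. coef F j * cnj (coef G j)) sums cnj (h2_inner G F)"
    using sums_cnj[of "\<lambda>j. coef G j * cnj (coef F j)"] by (simp add: mult.commute)
  then show ?thesis unfolding h2_inner_def by (rule sums_unique[symmetric])
qed

lemma h2_norm_le_norm_diff_if_orthogonal:
  assumes "F \<in> H2" "G \<in> H2" "h2_inner F G = 0"
  shows "h2_norm G \<le> h2_norm (F - G)"
proof -
  define a where "a j = coef F j" for j
  define b where "b j = coef G j" for j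
  have sa: "summable (\<lambda>j. (cmod (a j))\<^sup>2)" and sb: "summable (\<lambda>j. (cmod (b j))\<^sup>2)"
    using assms by (auto simp: H2_def a_def b_def)
  have "(\<lambda>j. a j * cnj (b j)) sums 0"
    using assms summable_h2_inner[OF assms(1,2)]
    unfolding h2_inner_def a_def b_def by (metis summable_sums)
  then have "(\<lambda>j. Re (a j * cnj (b j))) sums 0"
    using sums_Re by fastforce
  then have "(\<lambda>j. (cmod (a j))\<^sup>2 + (cmod (b j))\<^sup>2 - 2 * Re (a j * cnj (b j))) sums
               ((\<Sum>j. (cmod (a j))\<^sup>2) + (\<Sum>j. (cmod (b j))\<^sup>2) - 2 * 0)"
    by (intro sums_diff sums_add sums_mult summable_sums sa sb)
  moreover have "(cmod (coef (F - G) j))\<^sup>2 = (cmod (a j))\<^sup>2 + (cmod (b j))\<^sup>2 - 2 * Re (a j * cnj (b j))"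
    for j
  proof -
    have "coef (F - G) j = a j - b j"
      unfolding fun_diff_def a_def b_def using assms by (intro coef_diff H2_holomorphic)
    then show ?thesis
      by (simp only: cmod_power2) (simp add: power2_eq_square algebra_simps)
  qed
  ultimately have "(\<Sum>j. (cmod (coef (F - G) j))\<^sup>2) = (\<Sum>j. (cmod (a j))\<^sup>2) + (\<Sum>j. (cmod (b j))\<^sup>2)"
    by (simp add: sums_iff)
  moreover have "0 \<le> (\<Sum>j. (cmod (a j))\<^sup>2)" using sa by (intro suminf_nonneg) auto
  ultimately show ?thesis unfolding h2_norm_def b_def by simp
qed

section \<open>Orthogonality and hypercyclicity\<close>

lemma adjoint_preserves_orthogonality:
  assumes adj: "is_adjoint_on_H2 T S"
    and invariant: "\<And>G. G \<in> N \<Longrightarrow> \<exists>G'\<in>N. coef (T G) = coef G'"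
    and N: "N \<subseteq> H2"
    and F: "F \<in> H2" "\<And>G. G \<in> N \<Longrightarrow> h2_inner F G = 0"
    and G: "G \<in> N"
  shows "h2_inner (S F) G = 0"
proof -
  obtain G' where G': "G' \<in> N" "coef (T G) = coef G'"
    using invariant[OF G] by blast
  have "S F \<in> H2" using adj F(1) by (simp add: is_adjoint_on_H2_def)
  then have "h2_inner (S F) G = cnj (h2_inner G (S F))"
    using G N by (intro h2_inner_commute) auto
  also have "h2_inner G (S F) = h2_inner (T G) F"
    using adj F(1) G N by (auto simp: is_adjoint_on_H2_def)
  also have "\<dots> = h2_inner G' F"
    unfolding h2_inner_def G'(2) ..
  also have "\<dots> = cnj (h2_inner F G')"
    using F(1) G'(1) N by (intro h2_inner_commute) auto
  finally show ?thesis using F(2)[OF G'(1)] by simp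
qed

lemma hypercyclic_orbit_not_orthogonal:
  assumes "F \<in> hypercyclic_vectors S" "\<And>m. (S ^^ m) F \<in> H2"
    and "G \<in> H2" "h2_norm G > 0"
  shows "\<exists>m. h2_inner ((S ^^ m) F) G \<noteq> 0"
proof -
  obtain m where "h2_norm ((S ^^ m) F - G) < h2_norm G"
    using assms(1,3,4) unfolding hypercyclic_vectors_def by blast
  then show ?thesis
    using h2_norm_le_norm_diff_if_orthogonal[OF assms(2)[of m] assms(3)] by force
qed

section \<open>The functions \<open>h\<^sub>k\<close>\<close>

lemma norm_power_less_one: "cmod (u::complex) < 1 \<Longrightarrow> k \<ge> 1 \<Longrightarrow> cmod (u ^ k) < 1"
  by (simp add: norm_power power_less_one_iff)

lemma Re_one_minus_pos: "cmod (u::complex) < 1 \<Longrightarrow> 0 < Re (1 - u)"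
  using complex_Re_le_cmod[of u] by simp

lemma sum_power_eq: "cmod (v::complex) < 1 \<Longrightarrow> (\<Sum>i<k. v ^ i) = (1 - v ^ k) / (1 - v)"
  by (subst sum_gp_strict) auto

lemma Ln_sum_power_div:
  assumes v: "cmod v < 1" and k: "k \<ge> 1"
  shows "Ln ((\<Sum>i<k. v ^ i) / of_nat k) = Ln (1 - v ^ k) - Ln (1 - v) - of_real (ln (real k))"
proof -
  define a where "a = 1 - v ^ k"
  define b where "b = 1 - v"
  have Ra: "0 < Re a" and Rb: "0 < Re b"
    unfolding a_def b_def using Re_one_minus_pos norm_power_less_one v k by auto
  then have "a \<noteq> 0" "b \<noteq> 0" by auto
  define w where "w = Ln a - Ln b - of_real (ln (real k))"
  have "exp w = a / b / of_nat k"
    unfolding w_def using \<open>a \<noteq> 0\<close> \<open>b \<noteq> 0\<close> k by (simp add: exp_diff exp_of_real)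
  moreover have "-pi < Im w" "Im w \<le> pi"
    unfolding w_def using Re_Ln_pos_lt_imp[OF Ra] Re_Ln_pos_lt_imp[OF Rb] by auto
  ultimately have "Ln (a / b / of_nat k) = w"
    by (metis Ln_exp)
  then show ?thesis
    unfolding w_def a_def b_def sum_power_eq[OF v] by simp
qed

lemma hk_closed_form:
  assumes "cmod v < 1" "k \<ge> 1"
  shows "hk k v = (Ln (1 - v ^ k) - Ln (1 - v) - of_real (ln (real k))) / (1 - v)"
  unfolding hk_def Ln_sum_power_div[OF assms] by simp

lemma hk_holomorphic:
  assumes k: "k \<ge> 1"
  shows "hk k holomorphic_on ball 0 1"
proof (rule holomorphic_transform)
  show "(\<lambda>z. (Ln (1 - z ^ k) - Ln (1 - z) - of_real (ln (real k))) / (1 - z))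
          holomorphic_on ball 0 1"
  proof (intro holomorphic_intros)
    fix z :: complex assume "z \<in> ball 0 1"
    then have "0 < Re (1 - z)" "0 < Re (1 - z ^ k)"
      using Re_one_minus_pos norm_power_less_one k by auto
    then show "1 - z \<noteq> 0" "1 - z \<notin> \<real>\<^sub>\<le>\<^sub>0" "1 - z ^ k \<notin> \<real>\<^sub>\<le>\<^sub>0"
      by (auto simp: complex_nonpos_Reals_iff)
  qed
qed (use hk_closed_form k in auto)

lemma Wop_hk:
  assumes z: "cmod z < 1" and n: "n \<ge> 1" and k: "k \<ge> 1"
  shows "Wop n (hk k) z = hk (n * k) z - hk n z"
proof -
  have zn: "cmod (z ^ n) < 1" using norm_power_less_one[OF z n] .
  have nk: "n * k \<ge> 1" using n k by simp
  have "1 - z \<noteq> 0" "1 - z ^ n \<noteq> 0" using Re_one_minus_pos z zn by fastforce+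
  define X where "X = Ln (1 - z ^ (n * k)) - Ln (1 - z ^ n) - of_real (ln (real k))"
  have "Wop n (hk k) z = (1 - z ^ n) / (1 - z) * (X / (1 - z ^ n))"
    unfolding Wop_def hk_closed_form[OF zn k] sum_power_eq[OF z] X_def by (simp add: power_mult)
  also have "\<dots> = X / (1 - z)"
    using \<open>1 - z ^ n \<noteq> 0\<close> by simp
  also have "\<dots> = hk (n * k) z - hk n z"
    unfolding hk_closed_form[OF z nk] hk_closed_form[OF z n] X_def
    using n k by (simp add: ln_mult diff_divide_distrib add_divide_distrib)
  finally show ?thesis .
qed

lemma Wop_Nspan:
  assumes n: "n \<ge> 2" and G: "G \<in> Nspan"
  shows "\<exists>G'\<in>Nspan. coef (Wop n G) = coef G'"
proof -
  from G obtain K c where K: "finite K" "K \<subseteq> {2..}"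
    and G_eq: "G = (\<lambda>z. \<Sum>k\<in>K. c k * hk k z)"
    unfolding Nspan_def by blast
  define c' where "c' j = (if j = n then - (\<Sum>k\<in>K. c k) else c (j div n))" for j
  define G' where "G' = (\<lambda>z. c' n * hk n z + (\<Sum>j\<in>(*) n ` K. c' j * hk j z))"
  have n_notin: "n \<notin> (*) n ` K" and inj: "inj_on ((*) n) K"
    using K n by (auto simp: inj_on_def)
  have "2 \<le> n * k" if "k \<in> K" for k
    using mult_le_mono[of 1 n 2 k] that K n by auto
  then have "insert n ((*) n ` K) \<subseteq> {2..}"
    using n by auto
  then have "G' \<in> Nspan"
    unfolding Nspan_def G'_def using K n_notin
    by (intro CollectI exI[of _ "insert n ((*) n ` K)"] exI[of _ c']) auto
  moreover have "Wop n G z = G' z" if z: "z \<in> ball 0 1" for z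
  proof -
    have "Wop n G z = (\<Sum>k\<in>K. c k * Wop n (hk k) z)"
      unfolding Wop_def G_eq by (simp add: sum_distrib_left ac_simps)
    also have "\<dots> = (\<Sum>k\<in>K. c k * (hk (n * k) z - hk n z))"
      using K n z by (intro sum.cong refl) (subst Wop_hk, auto)
    also have "\<dots> = (\<Sum>k\<in>K. c k * hk (n * k) z) - (\<Sum>k\<in>K. c k) * hk n z"
      by (simp add: right_diff_distrib sum_subtractf sum_distrib_right)
    also have "(\<Sum>k\<in>K. c k * hk (n * k) z) = (\<Sum>k\<in>K. c' (n * k) * hk (n * k) z)"
      using K n by (intro sum.cong refl) (auto simp: c'_def)
    also have "\<dots> - (\<Sum>k\<in>K. c k) * hk n z = G' z"
      unfolding G'_def sum.reindex[OF inj] by (simp add: c'_def)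
    finally show ?thesis .
  qed
  then have "coef (Wop n G) = coef G'"
    by (intro coef_cong_ball[of 1]) auto
  ultimately show ?thesis by blast
qed

section \<open>Taylor coefficients of \<open>h\<^sub>k\<close>\<close>

text \<open>The \<open>j = 0\<close> term vanishes because \<open>u\<^sup>0 / 0 = 0\<close>.\<close>

lemma Ln_one_minus_sums:
  assumes "cmod u < 1"
  shows "(\<lambda>j. u ^ j / of_nat j) sums (- Ln (1 - u))"
  using sums_minus[OF Ln_series'[of "-u"]] assms by simp

definition log_ratio_coeff :: "nat \<Rightarrow> nat \<Rightarrow> real" where
  "log_ratio_coeff k j =
     (if j = 0 then - ln (real k) else 1 / real j - (if k dvd j then real k / real j else 0))"

lemma log_ratio_coeff_sums:
  assumes u: "cmod u < 1" and k: "k \<ge> 1"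
  shows "(\<lambda>j. of_real (log_ratio_coeff k j) * u ^ j)
           sums (Ln (1 - u ^ k) - Ln (1 - u) - of_real (ln (real k)))"
proof -
  define f where "f j = (if k dvd j then of_nat k / of_nat j else 0) * u ^ j" for j
  have "(\<lambda>m. f (k * m)) = (\<lambda>m. (u ^ k) ^ m / of_nat m)"
    using k by (auto simp: f_def power_mult)
  then have "(\<lambda>m. f (k * m)) sums (- Ln (1 - u ^ k))"
    using Ln_one_minus_sums norm_power_less_one[OF u k] by simp
  moreover have "strict_mono ((*) k)" using k by (auto simp: strict_mono_def)
  ultimately have "f sums (- Ln (1 - u ^ k))"
    by (subst (asm) sums_mono_reindex) (auto simp: f_def)
  then have series: "(\<lambda>j. (if j = 0 then - of_real (ln (real k)) else 0) + u ^ j / of_nat j - f j)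
               sums (- of_real (ln (real k)) + - Ln (1 - u) - - Ln (1 - u ^ k))"
    by (intro sums_add sums_diff sums_single[of 0 "\<lambda>_. - of_real (ln (real k))"]
              Ln_one_minus_sums u)
  have terms: "(\<lambda>j. (if j = 0 then - of_real (ln (real k)) else 0) + u ^ j / of_nat j - f j)
                   = (\<lambda>j. of_real (log_ratio_coeff k j) * u ^ j)"
    by (auto simp: log_ratio_coeff_def f_def field_simps)
  have limit: "- of_real (ln (real k)) + - Ln (1 - u) - - Ln (1 - u ^ k)
                = Ln (1 - u ^ k) - Ln (1 - u) - of_real (ln (real k))"
    by simp
  show ?thesis
    using series unfolding terms limit .
qed

lemma abs_log_ratio_coeff_le: "\<bar>log_ratio_coeff k j\<bar> \<le> \<bar>ln (real k)\<bar> + 1 + real k"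
proof (cases "j = 0")
  case False
  then have "\<bar>log_ratio_coeff k j\<bar> \<le> 1 / real j + real k / real j"
    using abs_triangle_ineq4[of "1 / real j" "real k / real j"]
    unfolding log_ratio_coeff_def by (cases "k dvd j") simp_all
  also have "\<dots> \<le> 1 + real k"
    using False by (intro add_mono) (auto simp: divide_le_eq mult_le_cancel_left1)
  finally show ?thesis by linarith
qed (simp add: log_ratio_coeff_def)

lemma hk_sums:
  assumes u: "cmod u < 1" and k: "k \<ge> 1"
  shows "(\<lambda>J. of_real (\<Sum>j\<le>J. log_ratio_coeff k j) * u ^ J) sums hk k u"
proof -
  define a where "a j = of_real (log_ratio_coeff k j) * u ^ j" for j
  have "summable (\<lambda>j. norm (a j))"
  proof (rule summable_comparison_test[rotated])
    show "summable (\<lambda>j. (\<bar>ln (real k)\<bar> + 1 + real k) * cmod u ^ j)"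
      using u by (intro summable_mult summable_geometric) simp
    show "\<exists>N. \<forall>j\<ge>N. norm (norm (a j)) \<le> (\<bar>ln (real k)\<bar> + 1 + real k) * cmod u ^ j"
      using abs_log_ratio_coeff_le
      by (auto simp: a_def norm_mult norm_power intro!: mult_right_mono)
  qed
  moreover have "summable (\<lambda>i. norm (u ^ i))"
    using u by (simp add: norm_power summable_geometric)
  ultimately have "(\<lambda>J. \<Sum>j\<le>J. a j * u ^ (J - j)) sums ((\<Sum>j. a j) * (\<Sum>i. u ^ i))"
    by (rule Cauchy_product_sums)
  moreover have "(\<Sum>j. a j) = Ln (1 - u ^ k) - Ln (1 - u) - of_real (ln (real k))"
    unfolding a_def using log_ratio_coeff_sums[OF u k] by (rule sums_unique[symmetric])
  moreover have "(\<Sum>i. u ^ i) = 1 / (1 - u)"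
    using u by (rule suminf_geometric)
  moreover have "(\<Sum>j\<le>J. a j * u ^ (J - j)) = of_real (\<Sum>j\<le>J. log_ratio_coeff k j) * u ^ J" for J
    by (simp add: a_def sum_distrib_right mult.assoc power_add[symmetric])
  ultimately show ?thesis
    using hk_closed_form[OF u k] by simp
qed

lemma sum_log_ratio_coeff:
  assumes k: "k \<ge> 1"
  shows "(\<Sum>j\<le>J. log_ratio_coeff k j) = harm J - harm (J div k) - ln (real k)"
proof (induction J)
  case 0
  then show ?case by (simp add: log_ratio_coeff_def harm_def)
next
  case (Suc J)
  have "harm (Suc J div k) - harm (J div k) = (if k dvd Suc J then real k / real (Suc J) else 0 :: real)"
  proof (cases "k dvd Suc J")
    case True
    then have "Suc J div k = Suc (J div k)" and "real (Suc (J div k)) = real (Suc J) / real k"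
      using div_Suc[of J k] real_of_nat_div[OF True] by auto
    then show ?thesis using True by (simp add: harm_Suc)
  next
    case False
    then have "Suc J div k = J div k" using div_Suc[of J k] k by (auto simp: dvd_eq_mod_eq_0)
    then show ?thesis using False by simp
  qed
  then show ?case
    using Suc.IH by (simp add: log_ratio_coeff_def harm_Suc inverse_eq_divide)
qed

lemma coef_hk:
  assumes k: "k \<ge> 1"
  shows "coef (hk k) J = of_real (harm J - harm (J div k) - ln (real k))"
proof -
  define c where "c = Abs_fps (\<lambda>J. of_real (\<Sum>j\<le>J. log_ratio_coeff k j) :: complex)"
  have "eventually (\<lambda>u. u \<in> ball 0 1) (nhds (0::complex))"
    by (intro eventually_nhds_in_open) auto
  then have "eventually (\<lambda>u. (\<lambda>J. fps_nth c J * u ^ J) sums hk k u) (nhds 0)"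
    by (rule eventually_mono) (use hk_sums[OF _ k] in \<open>auto simp: c_def\<close>)
  then have "hk k has_fps_expansion c"
    by (rule has_fps_expansionI)
  from fps_nth_fps_expansion[OF this, of J] show ?thesis
    by (simp add: c_def coef_def sum_log_ratio_coeff[OF k])
qed

lemma harm_diff_le_ln_diff:
  assumes "0 < q" "q \<le> J"
  shows "harm J - harm q \<le> ln (real J) - ln (real q)"
  using euler_mascheroni_sequence_decreasing[OF assms] by simp

lemma ln_diff_le_harm_diff:
  assumes "q \<le> J"
  shows "ln (real J + 1) - ln (real q + 1) \<le> harm J - harm q"
proof -
  have "incseq (\<lambda>n. harm n - ln (real n + 1) :: real)"
  proof (rule incseq_SucI)
    fix n
    show "harm n - ln (real n + 1) \<le> harm (Suc n) - ln (real (Suc n) + 1)"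
      using ln_diff_le_inverse[of "real n + 1"] by (simp add: harm_Suc inverse_eq_divide add_ac)
  qed
  then show ?thesis using assms by (auto dest: incseqD)
qed

lemma hk_coeff_bound:
  assumes k: "k \<ge> 1" and J: "k \<le> J"
  shows "\<bar>harm J - harm (J div k) - ln (real k)\<bar> \<le> 2 * real k / real J"
proof -
  define q where "q = J div k"
  have q: "1 \<le> q" "q \<le> J"
    unfolding q_def using J k div_le_mono[OF J, of k] by auto
  have "k * q \<le> J + 1"
    unfolding q_def using times_div_less_eq_dividend[of k J] by linarith
  moreover have "J \<le> k * (q + 1)"
    unfolding q_def using k dividend_less_times_div[of k J] by (simp add: mult.commute)
  ultimately have "real (k * q) \<le> real (J + 1)" "real J \<le> real (k * (q + 1))"
    by (simp_all only: of_nat_le_iff)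
  then have kq: "real k * real q \<le> real J + 1" "real J \<le> real k * (real q + 1)"
    by (simp_all only: of_nat_mult of_nat_add of_nat_1)
  moreover have "0 < real k * real q" "0 < real J"
    using k q by simp_all
  ultimately have "ln (real k) + ln (real q) \<le> ln (real J + 1)"
    "ln (real J) \<le> ln (real k) + ln (real q + 1)"
    using k q by (simp_all flip: ln_mult_pos)
  moreover have "ln (real q + 1) - ln (real q) < 1 / real q"
    using q by (intro ln_diff_le_inverse) simp
  moreover have "harm J - harm q \<le> ln (real J) - ln (real q)"
    "ln (real J + 1) - ln (real q + 1) \<le> harm J - harm q"
    using q by (intro harm_diff_le_ln_diff ln_diff_le_harm_diff; simp)+
  moreover have "1 / real q \<le> 2 * real k / real J"
  proof -
    have "real J \<le> 2 * real k * real q"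
      using kq(2) mult_left_mono[of 1 "real q" "real k"] q by (simp add: algebra_simps)
    then show ?thesis using q k by (simp add: field_simps)
  qed
  ultimately show ?thesis
    unfolding q_def[symmetric] by linarith
qed

lemma hk_in_H2:
  assumes k: "k \<ge> 1"
  shows "hk k \<in> H2"
proof -
  have "(cmod (coef (hk k) J))\<^sup>2 \<le> (4 * (real k)\<^sup>2) * inverse ((real J)\<^sup>2)" if J: "k \<le> J" for J
  proof -
    have "cmod (coef (hk k) J) \<le> 2 * real k / real J"
      unfolding coef_hk[OF k] norm_of_real by (rule hk_coeff_bound[OF k J])
    then have "(cmod (coef (hk k) J))\<^sup>2 \<le> (2 * real k / real J)\<^sup>2"
      by (intro power_mono) auto
    then show ?thesis
      by (simp add: power_divide power_mult_distrib divide_inverse power_inverse)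
  qed
  then have "eventually (\<lambda>J. norm ((cmod (coef (hk k) J))\<^sup>2) \<le> (4 * (real k)\<^sup>2) * inverse ((real J)\<^sup>2))
               sequentially"
    by (auto simp: eventually_sequentially)
  moreover have "summable (\<lambda>J. (4 * (real k)\<^sup>2) * inverse ((real J)\<^sup>2))"
    by (intro summable_mult inverse_power_summable) simp
  ultimately have "summable (\<lambda>J. (cmod (coef (hk k) J))\<^sup>2)"
    by (rule summable_comparison_test_ev)
  then show ?thesis using hk_holomorphic[OF k] by (simp add: H2_def)
qed

lemma Nspan_subset_H2: "Nspan \<subseteq> H2"
  unfolding Nspan_def by (auto intro!: H2_linear_combination hk_in_H2)

lemma Nperp_invariant:
  assumes "n \<ge> 2" "is_adjoint_on_H2 (Wop n) S" "F \<in> Nperp"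
  shows "S F \<in> Nperp"
  using assms adjoint_preserves_orthogonality[OF assms(2) Wop_Nspan[OF assms(1)] Nspan_subset_H2]
  unfolding Nperp_def is_adjoint_on_H2_def by blast

lemma hk_2_in_Nspan: "hk 2 \<in> Nspan"
  unfolding Nspan_def by (intro CollectI exI[of _ "{2}"] exI[of _ "\<lambda>_. 1"]) auto

lemma h2_norm_hk_2_pos: "h2_norm (hk 2) > 0"
proof -
  have "coef (hk 2) 0 = of_real (- ln 2)"
    using coef_hk[of 2 0] by simp
  then have "0 < (cmod (coef (hk 2) 0))\<^sup>2" by simp
  also have "\<dots> \<le> (\<Sum>j. (cmod (coef (hk 2) j))\<^sup>2)"
    using sum_le_suminf[OF H2_summable[OF hk_in_H2[of 2]], of "{0}"] by simp
  finally show ?thesis unfolding h2_norm_def by simp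
qed

theorem mainTheorem18:
  fixes n :: nat
    and S :: "(complex \<Rightarrow> complex) \<Rightarrow> (complex \<Rightarrow> complex)"
  assumes "n \<ge> 2"
    and "is_adjoint_on_H2 (Wop n) S"
  shows "Nperp \<inter> hypercyclic_vectors S = {}"
proof -
  have "F \<notin> hypercyclic_vectors S" if F: "F \<in> Nperp" for F
  proof
    assume hypercyclic: "F \<in> hypercyclic_vectors S"
    have orbit: "(S ^^ m) F \<in> Nperp" for m
      by (induction m) (use F Nperp_invariant[OF assms] in auto)
    then obtain m where "h2_inner ((S ^^ m) F) (hk 2) \<noteq> 0"
      using hypercyclic_orbit_not_orthogonal[OF hypercyclic _ hk_in_H2 h2_norm_hk_2_pos]
      by (auto simp: Nperp_def)
    then show False
      using orbit[of m] hk_2_in_Nspan by (auto simp: Nperp_def)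
  qed
  then show ?thesis by blast
qed

end
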